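(* For any permutation $\pi$ of $D$, the function $f:D'^2\to\mathbb{R}$ given by $f(x,y)=0$ if $x=y=0$ or if $x,y\in D$ with $x=\pi(y)$; $f(x,y)=1$ if $x,y\in D$ with $x\ne\pi(y)$; and $f(x,y)=\tfrac12$ if exactly one of $x,y$ equals $0$ (the basic $k$-submodular relaxation of the soft version of the constraint $(x=\pi(y))$) is $k$-submodular representable.
   Context: $D=\{1,\dots,k\}$, $D'=\{0\}\cup D$. For a variable set $X$ and $v\in X$ let $X_v=\{v_i:i\in D\}$. An $(X,k)$-network is a directed network with nonnegative capacities $c$ on vertex set $\bigcup_{v\in X}X_v\cup\{s,t\}$; an $s$-$t$ cut $S$ has capacity the total capacity of edges leaving $S$. For $\phi:X\to D'$, $S_\phi=\{s\}\cup\{v_{\phi(v)}:\phi(v)\ne0\}$; the network represents $g$ if $c(S_\phi)=g(\phi)$ for all $\phi$. For an $s$-$t$ cut $S$, $\nu(S)=\{s\}\cup\{v_i:S\cap X_v=\{v_i\}\}$; the network is $k$-submodular if $c(S)\ge c(\nu(S))$ for every $s$-$t$ cut. A function of variables $X$ is $k$-submodular representable if some $k$-submodular $(X,k)$-network represents it. *)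

theory Defs
  imports Complex_Main "HOL-Combinatorics.Permutations"
begin

datatype 'v vtx = Src | Snk | Nd 'v nat

definition vertices :: "'v set \<Rightarrow> nat \<Rightarrow> 'v vtx set" where
  "vertices X k = {Src, Snk} \<union> {Nd v i | v i. v \<in> X \<and> i \<in> {1..k}}"

definition var_block :: "nat \<Rightarrow> 'v \<Rightarrow> 'v vtx set" where
  "var_block k v = {Nd v i | i. i \<in> {1..k}}"

definition is_st_cut :: "'v set \<Rightarrow> nat \<Rightarrow> 'v vtx set \<Rightarrow> bool" where
  "is_st_cut X k S \<longleftrightarrow> S \<subseteq> vertices X k \<and> Src \<in> S \<and> Snk \<notin> S"

definition cut_cap :: "'v set \<Rightarrow> nat \<Rightarrow> ('v vtx \<Rightarrow> 'v vtx \<Rightarrow> real) \<Rightarrow> 'v vtx set \<Rightarrow> real" where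
  "cut_cap X k c S = (\<Sum>(u, w) \<in> S \<times> (vertices X k - S). c u w)"

definition S_of :: "'v set \<Rightarrow> ('v \<Rightarrow> nat) \<Rightarrow> 'v vtx set" where
  "S_of X \<phi> = {Src} \<union> {Nd v (\<phi> v) | v. v \<in> X \<and> \<phi> v \<noteq> 0}"

definition nu :: "'v set \<Rightarrow> nat \<Rightarrow> 'v vtx set \<Rightarrow> 'v vtx set" where
  "nu X k S = {Src} \<union> {Nd v i | v i. v \<in> X \<and> i \<in> {1..k} \<and> S \<inter> var_block k v = {Nd v i}}"

definition nonneg_caps :: "('v vtx \<Rightarrow> 'v vtx \<Rightarrow> real) \<Rightarrow> bool" where
  "nonneg_caps c \<longleftrightarrow> (\<forall>u w. 0 \<le> c u w)"

definition represents ::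
  "'v set \<Rightarrow> nat \<Rightarrow> ('v vtx \<Rightarrow> 'v vtx \<Rightarrow> real) \<Rightarrow> (('v \<Rightarrow> nat) \<Rightarrow> real) \<Rightarrow> bool" where
  "represents X k c g \<longleftrightarrow> (\<forall>\<phi>. (\<forall>v\<in>X. \<phi> v \<in> {0..k}) \<longrightarrow> cut_cap X k c (S_of X \<phi>) = g \<phi>)"

definition k_submodular_network :: "'v set \<Rightarrow> nat \<Rightarrow> ('v vtx \<Rightarrow> 'v vtx \<Rightarrow> real) \<Rightarrow> bool" where
  "k_submodular_network X k c \<longleftrightarrow>
     (\<forall>S. is_st_cut X k S \<longrightarrow> cut_cap X k c S \<ge> cut_cap X k c (nu X k S))"

definition k_submodular_representable :: "'v set \<Rightarrow> nat \<Rightarrow> (('v \<Rightarrow> nat) \<Rightarrow> real) \<Rightarrow> bool" where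
  "k_submodular_representable X k g \<longleftrightarrow>
     (\<exists>c. nonneg_caps c \<and> k_submodular_network X k c \<and> represents X k c g)"

definition soft_perm :: "(nat \<Rightarrow> nat) \<Rightarrow> nat \<Rightarrow> nat \<Rightarrow> real" where
  "soft_perm \<pi> x y =
     (if x = 0 \<and> y = 0 then 0
      else if x \<noteq> 0 \<and> y \<noteq> 0 then (if x = \<pi> y then 0 else 1)
      else 1/2)"

end

theory Submission
  imports Defs
begin

text \<open>Join \<open>0_\<pi>(j)\<close> and \<open>1_j\<close> by a pair of opposite edges of capacity \<open>1/2\<close>, for every \<open>j \<in> D\<close>.
  A cut then costs half the number of pairs it separates. The cut \<open>S\<^sub>\<phi>\<close> contains at most
  one vertex of each variable, so it separates no pair if \<open>\<phi>\<close> is zero or satisfies \<open>x = \<pi>(y)\<close>,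
  one pair if exactly one variable is zero, and two pairs otherwise.
  For \<open>k\<close>-submodularity, \<open>\<nu>(S)\<close> keeps a vertex only when it is alone in its variable block;
  replacing the two sets \<open>P, Q \<subseteq> D\<close> of pairs whose endpoint lies in \<open>S\<close> by their
  singleton indicators can only shrink their symmetric difference.\<close>

definition pair_network :: "'a set \<Rightarrow> ('a \<Rightarrow> 'v vtx) \<Rightarrow> ('a \<Rightarrow> 'v vtx) \<Rightarrow> 'v vtx \<Rightarrow> 'v vtx \<Rightarrow> real"
  where "pair_network J a b u w =
    (\<Sum>j\<in>J. (of_bool (u = a j \<and> w = b j) + of_bool (u = b j \<and> w = a j)) / 2)"

lemma nonneg_caps_pair_network: "nonneg_caps (pair_network J a b)"
  unfolding nonneg_caps_def pair_network_def by (auto intro!: sum_nonneg)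

lemma finite_vertices: "finite X \<Longrightarrow> finite (vertices X k)"
proof -
  assume "finite X"
  have "{Nd v i | v i. v \<in> X \<and> i \<in> {1..k}} = (\<lambda>(v, i). Nd v i) ` (X \<times> {1..k})" by auto
  with \<open>finite X\<close> show ?thesis unfolding vertices_def by simp
qed

lemma sum_pair_network:
  assumes "finite T"
  shows "(\<Sum>(u, w)\<in>T. pair_network J a b u w) =
    (\<Sum>j\<in>J. (of_bool ((a j, b j) \<in> T) + of_bool ((b j, a j) \<in> T)) / 2)"
proof -
  have "(\<Sum>(u, w)\<in>T. pair_network J a b u w) =
      (\<Sum>j\<in>J. \<Sum>p\<in>T. (of_bool (p = (a j, b j)) + of_bool (p = (b j, a j))) / 2)"
    unfolding pair_network_def by (subst sum.swap) (auto simp: case_prod_beta intro!: sum.cong)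
  also have "\<dots> = (\<Sum>j\<in>J. (of_bool ((a j, b j) \<in> T) + of_bool ((b j, a j) \<in> T)) / 2)"
    using assms by (simp add: sum.distrib of_bool_def sum.delta flip: sum_divide_distrib)
  finally show ?thesis .
qed

lemma cut_cap_pair_network:
  assumes "finite X" "finite J" "S \<subseteq> vertices X k"
    and "a ` J \<subseteq> vertices X k" "b ` J \<subseteq> vertices X k"
  shows "cut_cap X k (pair_network J a b) S = card {j\<in>J. (a j \<in> S) \<noteq> (b j \<in> S)} / 2"
proof -
  have "finite (S \<times> (vertices X k - S))"
    using assms(1,3) finite_vertices finite_subset by blast
  then have "cut_cap X k (pair_network J a b) S =
      (\<Sum>j\<in>J. (of_bool ((a j, b j) \<in> S \<times> (vertices X k - S))
               + of_bool ((b j, a j) \<in> S \<times> (vertices X k - S))) / 2)"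
    unfolding cut_cap_def by (rule sum_pair_network)
  also have "\<dots> = (\<Sum>j\<in>J. of_bool ((a j \<in> S) \<noteq> (b j \<in> S)) / 2)"
    using assms(4,5) by (intro sum.cong) auto
  also have "\<dots> = card {j\<in>J. (a j \<in> S) \<noteq> (b j \<in> S)} / 2"
    using assms(2) by (simp flip: sum_divide_distrib add: Collect_conj_eq Int_commute)
  finally show ?thesis .
qed

lemma Nd_in_nu_iff:
  "Nd v i \<in> nu X k S \<longleftrightarrow> v \<in> X \<and> i \<in> {1..k} \<and> {i'\<in>{1..k}. Nd v i' \<in> S} = {i}"
proof -
  have block: "S \<inter> var_block k v = Nd v ` {i'\<in>{1..k}. Nd v i' \<in> S}"
    unfolding var_block_def by auto
  have image_eq: "Nd v ` I = {Nd v i} \<longleftrightarrow> I = {i}" for I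
  proof
    assume "Nd v ` I = {Nd v i}"
    then show "I = {i}" by (auto simp: image_iff)
  qed simp
  have "Nd v i \<in> nu X k S \<longleftrightarrow> v \<in> X \<and> i \<in> {1..k} \<and> S \<inter> var_block k v = {Nd v i}"
    unfolding nu_def by blast
  then show ?thesis
    unfolding block image_eq by blast
qed

lemma permutes_preimage_eq_singleton:
  assumes "\<pi> permutes A" "j \<in> A"
  shows "{j'\<in>A. P (\<pi> j')} = {j} \<longleftrightarrow> {i\<in>A. P i} = {\<pi> j}"
proof
  assume preimage: "{j'\<in>A. P (\<pi> j')} = {j}"
  then have "\<pi> j \<in> {i\<in>A. P i}"
    using permutes_in_image[OF assms(1)] by auto
  moreover have "i = \<pi> j" if "i \<in> {i\<in>A. P i}" for i
  proof -
    have "inv \<pi> i \<in> {j'\<in>A. P (\<pi> j')}"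
      using that permutes_inverses(1)[OF assms(1)] permutes_in_image[OF permutes_inv[OF assms(1)]]
      by simp
    then show ?thesis
      using preimage permutes_inverses(1)[OF assms(1)] by (metis singletonD)
  qed
  ultimately show "{i\<in>A. P i} = {\<pi> j}" by blast
next
  assume image: "{i\<in>A. P i} = {\<pi> j}"
  have "j' = j" if "j' \<in> A" "P (\<pi> j')" for j'
  proof -
    have "\<pi> j' \<in> {i\<in>A. P i}"
      using that permutes_in_image[OF assms(1)] by simp
    then show ?thesis
      using image permutes_inj[OF assms(1)] by (simp add: inj_eq)
  qed
  moreover have "P (\<pi> j)"
    using image by blast
  ultimately show "{j'\<in>A. P (\<pi> j')} = {j}"
    using assms(2) by blast
qed

lemma Nd_in_nu_permuted_iff:
  assumes "\<pi> permutes {1..k}" "v \<in> X" "j \<in> {1..k}"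
  shows "Nd v (\<pi> j) \<in> nu X k S \<longleftrightarrow> {j'\<in>{1..k}. Nd v (\<pi> j') \<in> S} = {j}"
proof -
  have "\<pi> j \<in> {1..k}"
    using assms(3) permutes_in_image[OF assms(1)] by blast
  with assms(2) have "Nd v (\<pi> j) \<in> nu X k S \<longleftrightarrow> {i\<in>{1..k}. Nd v i \<in> S} = {\<pi> j}"
    by (simp only: Nd_in_nu_iff simp_thms)
  also have "\<dots> \<longleftrightarrow> {j'\<in>{1..k}. Nd v (\<pi> j') \<in> S} = {j}"
    by (rule permutes_preimage_eq_singleton[OF assms(1,3), symmetric])
  finally show ?thesis .
qed

lemma card_singleton_disagreement_le:
  assumes "finite A" "P \<subseteq> A" "Q \<subseteq> A"
  shows "card {j\<in>A. (P = {j}) \<noteq> (Q = {j})} \<le> card {j\<in>A. (j \<in> P) \<noteq> (j \<in> Q)}"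
proof (cases "P = Q")
  case False
  then have "{j\<in>A. (j \<in> P) \<noteq> (j \<in> Q)} \<noteq> {}"
    using assms(2,3) by blast
  then have nonempty: "1 \<le> card {j\<in>A. (j \<in> P) \<noteq> (j \<in> Q)}"
    using assms(1) by (simp add: Suc_le_eq card_gt_0_iff)
  show ?thesis
  proof (cases "\<exists>p q. P = {p} \<and> Q = {q}")
    case True
    then obtain p q where "P = {p}" "Q = {q}" by blast
    then have "{j\<in>A. (P = {j}) \<noteq> (Q = {j})} = {j\<in>A. (j \<in> P) \<noteq> (j \<in> Q)}" by auto
    then show ?thesis by simp
  next
    case False
    \<comment> \<open>two distinct \<open>j\<close> on the left would force both \<open>P\<close> and \<open>Q\<close> to be singletons\<close>
    then have "card {j\<in>A. (P = {j}) \<noteq> (Q = {j})} \<le> 1"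
      using assms(1) by (auto simp: card_le_Suc0_iff_eq)
    with nonempty show ?thesis by linarith
  qed
qed simp

definition perm_network :: "nat \<Rightarrow> (nat \<Rightarrow> nat) \<Rightarrow> nat vtx \<Rightarrow> nat vtx \<Rightarrow> real"
  where "perm_network k \<pi> = pair_network {1..k} (\<lambda>j. Nd 0 (\<pi> j)) (Nd 1)"

lemma cut_cap_perm_network:
  assumes "\<pi> permutes {1..k}" "S \<subseteq> vertices {0, 1} k"
  shows "cut_cap {0, 1} k (perm_network k \<pi>) S =
    card {j\<in>{1..k}. (Nd 0 (\<pi> j) \<in> S) \<noteq> (Nd 1 j \<in> S)} / 2"
proof -
  have "\<pi> j \<in> {1..k}" if "j \<in> {1..k}" for j
    using that permutes_in_image[OF assms(1)] by blast
  then show ?thesis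
    unfolding perm_network_def using assms(2)
    by (intro cut_cap_pair_network) (auto simp: vertices_def)
qed

lemma card_disagreement_soft_perm:
  assumes "\<pi> permutes {1..k}" "x \<le> k" "y \<le> k"
  shows "card {j\<in>{1..k}. (x \<noteq> 0 \<and> \<pi> j = x) \<noteq> (y \<noteq> 0 \<and> j = y)} / 2 = soft_perm \<pi> x y"
proof -
  let ?x' = "inv \<pi> x"
  have x'_iff: "\<pi> j = x \<longleftrightarrow> j = ?x'" for j
    using permutes_inv_eq[OF assms(1)] by metis
  have "x \<noteq> 0 \<Longrightarrow> ?x' \<in> {1..k}"
    using assms(1,2) permutes_in_image[OF permutes_inv[OF assms(1)]] by auto
  then have "{j\<in>{1..k}. (x \<noteq> 0 \<and> \<pi> j = x) \<noteq> (y \<noteq> 0 \<and> j = y)} =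
      ((if x = 0 then {} else {?x'}) - (if y = 0 then {} else {y}))
      \<union> ((if y = 0 then {} else {y}) - (if x = 0 then {} else {?x'}))"
    using assms(3) unfolding x'_iff by auto
  moreover have "x = \<pi> y \<longleftrightarrow> ?x' = y"
    using x'_iff by metis
  ultimately show ?thesis
    by (auto simp: soft_perm_def)
qed

lemma represents_perm_network:
  assumes "\<pi> permutes {1..k}"
  shows "represents {0, 1} k (perm_network k \<pi>) (\<lambda>\<phi>. soft_perm \<pi> (\<phi> 0) (\<phi> 1))"
  unfolding represents_def
proof (intro allI impI)
  fix \<phi> :: "nat \<Rightarrow> nat"
  assume range: "\<forall>v\<in>{0, 1}. \<phi> v \<in> {0..k}"
  let ?S = "S_of {0, 1} \<phi>"
  have "?S \<subseteq> vertices {0, 1} k"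
    using range unfolding S_of_def vertices_def by auto
  then have "cut_cap {0, 1} k (perm_network k \<pi>) ?S =
      card {j\<in>{1..k}. (Nd 0 (\<pi> j) \<in> ?S) \<noteq> (Nd 1 j \<in> ?S)} / 2"
    by (rule cut_cap_perm_network[OF assms])
  also have "{j\<in>{1..k}. (Nd 0 (\<pi> j) \<in> ?S) \<noteq> (Nd 1 j \<in> ?S)} =
      {j\<in>{1..k}. (\<phi> 0 \<noteq> 0 \<and> \<pi> j = \<phi> 0) \<noteq> (\<phi> 1 \<noteq> 0 \<and> j = \<phi> 1)}"
    unfolding S_of_def by auto
  also have "card \<dots> / 2 = soft_perm \<pi> (\<phi> 0) (\<phi> 1)"
    using range by (intro card_disagreement_soft_perm[OF assms]) auto
  finally show "cut_cap {0, 1} k (perm_network k \<pi>) ?S = soft_perm \<pi> (\<phi> 0) (\<phi> 1)" .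
qed

lemma k_submodular_perm_network:
  assumes perm: "\<pi> permutes {1..k}"
  shows "k_submodular_network {0, 1} k (perm_network k \<pi>)"
  unfolding k_submodular_network_def
proof (intro allI impI)
  fix S :: "nat vtx set"
  assume "is_st_cut {0, 1} k S"
  then have S_vertices: "S \<subseteq> vertices {0, 1} k"
    by (simp add: is_st_cut_def)
  have nu_vertices: "nu {0, 1} k S \<subseteq> vertices {0, 1} k"
    unfolding nu_def vertices_def by blast
  define P where "P = {j\<in>{1..k}. Nd 0 (\<pi> j) \<in> S}"
  define Q where "Q = {j\<in>{1..k}. Nd 1 j \<in> S}"
  have nu_disagreement:
    "{j\<in>{1..k}. (Nd 0 (\<pi> j) \<in> nu {0, 1} k S) \<noteq> (Nd 1 j \<in> nu {0, 1} k S)} =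
     {j\<in>{1..k}. (P = {j}) \<noteq> (Q = {j})}"
  proof (intro Collect_cong conj_cong refl)
    fix j assume j: "j \<in> {1..k}"
    have "Nd 0 (\<pi> j) \<in> nu {0, 1} k S \<longleftrightarrow> P = {j}"
      unfolding P_def by (rule Nd_in_nu_permuted_iff[OF perm _ j]) simp
    moreover have "Nd 1 j \<in> nu {0, 1} k S \<longleftrightarrow> Q = {j}"
      unfolding Q_def using j by (simp add: Nd_in_nu_iff)
    ultimately show "((Nd 0 (\<pi> j) \<in> nu {0, 1} k S) \<noteq> (Nd 1 j \<in> nu {0, 1} k S)) = ((P = {j}) \<noteq> (Q = {j}))"
      by simp
  qed
  have S_disagreement:
    "{j\<in>{1..k}. (Nd 0 (\<pi> j) \<in> S) \<noteq> (Nd 1 j \<in> S)} = {j\<in>{1..k}. (j \<in> P) \<noteq> (j \<in> Q)}"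
    unfolding P_def Q_def by blast
  have "cut_cap {0, 1} k (perm_network k \<pi>) (nu {0, 1} k S) =
      card {j\<in>{1..k}. (P = {j}) \<noteq> (Q = {j})} / 2"
    using cut_cap_perm_network[OF perm nu_vertices] unfolding nu_disagreement .
  also have "\<dots> \<le> card {j\<in>{1..k}. (j \<in> P) \<noteq> (j \<in> Q)} / 2"
  proof -
    have "P \<subseteq> {1..k}" "Q \<subseteq> {1..k}"
      unfolding P_def Q_def by auto
    then show ?thesis
      using card_singleton_disagreement_le[of "{1..k}" P Q] by simp
  qed
  also have "\<dots> = cut_cap {0, 1} k (perm_network k \<pi>) S"
    using cut_cap_perm_network[OF perm S_vertices] unfolding S_disagreement ..
  finally show "cut_cap {0, 1} k (perm_network k \<pi>) S \<ge> cut_cap {0, 1} k (perm_network k \<pi>) (nu {0, 1} k S)" .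
qed

theorem lemma21:
  fixes k :: nat and \<pi> :: "nat \<Rightarrow> nat"
  assumes "\<pi> permutes {1..k}"
  shows "k_submodular_representable {0::nat, 1} k (\<lambda>\<phi>. soft_perm \<pi> (\<phi> 0) (\<phi> 1))"
  unfolding k_submodular_representable_def
proof (intro exI conjI)
  show "nonneg_caps (perm_network k \<pi>)"
    unfolding perm_network_def by (rule nonneg_caps_pair_network)
qed (fact k_submodular_perm_network[OF assms] represents_perm_network[OF assms])+

end
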